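(* The sum $\oplus$ and the trace operator $\mathrm{tr}$ of $\mathcal M_{\max\star}(\mathbb S^{\mathrm{m},\mathbb P}_r)$ are monotone with respect to the orders $\le_{\mathcal M}$ on its hom-sets.
   Context: Notation: $[k]=\{1,\dots,k\}$; $T(X)=X+\mathbb R\times X+\{\exists^*,\forall^*\}$; diagrammatic composition. $\mathbb S^{\mathrm{m},\mathbb P}_r$: objects natural numbers; arrows $f:m\to n$ are functions $[m]\to T([n])$ such that for all $i\ne j$, $f(i)\notin[n]$ or $f(j)\notin\{f(i)\}\cup\mathbb R\times\{f(i)\}$; hom-sets ordered pointwise by the least order on $T([n])$ with $(r_1,i)\le(r_2,i)$ if $r_1\ge r_2$, $\exists^*\le z$, $z\le\forall^*$. Operations: $(f;g)(i)=f(i)$ if $f(i)\in\{\exists^*,\forall^*\}$; $g(j)$ if $f(i)=j$; $g(j)$ if $f(i)=(r,j)$, $g(j)\in\{\exists^*,\forall^*\}$; $(r,k)$ if $f(i)=(r,j)$, $g(j)=k$; $(r+r',k)$ if $f(i)=(r,j)$, $g(j)=(r',k)$. $(f\oplus g)(i)=f(i)$ ($i\le m$), $(f\oplus g)(m+i)$ is $g(i)$ with its index $j$ (if any) shifted to $n+j$. Trace of $f:l+m\to l+n$ at $i\in[m]$: $v_0=l+i$; if $j=0$ or $v_j\in[l]$, $v_{j+1}=f(v_j)$; if $v_j=(r,k)$, $k\in[l]$, $v_{j+1}=f(k)$; otherwise stop. If finite $(v_0..v_K)$ with $S$ the sum of first components of $v_j\in\mathbb R\times[l+n]$ ($1\le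 j\le K$): $v_K$ if $v_K\in\{\exists^*,\forall^*\}$; $k$ if $v_K=l+k$ and $v_j\in[l]$ for $1\le j<K$; $(S,k)$ if $v_K=l+k$ and some earlier $v_j\in\mathbb R\times[l]$; $(S,k)$ if $v_K=(r,l+k)$. If infinite, with $w'_t$ the first components of the (infinitely many) entries in $\mathbb R\times[l]$: $\exists^*$ if $\liminf_N\frac1N\sum_{t\le N}w'_t\ge0$, else $\forall^*$. For a poset $X$, $\mathcal M(X)$ is the set of nonempty finite subsets of pairwise incomparable elements, ordered by $S\le_{\mathcal M}T$ iff every $x\in S$ has some $y\in T$ with $x\le y$; $S^{\circ}$ is the set of maximal elements of $S$. $\mathcal M_{\max\star}(\mathbb S^{\mathrm{m},\mathbb P}_r)$ has objects natural numbers and arrows $m\to n$ the elements of $\mathcal M(\mathbb S^{\mathrm{m},\mathbb P}_r(m,n))$, with $S;T=\{f;g\mid f\in S,g\in T\}^{\circ}$, $S\oplus T=\{f\oplus g\mid f\in S,g\in T\}^{\circ}$, $\mathrm{tr}^l_{m,n}(S)=\{\mathrm{tr}^l_{m,n}(f)\mid f\in S\}^{\circ}$. *)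

theory Defs
  imports Complex_Main "HOL-Library.Infinite_Set" "HOL-Library.Liminf_Limsup" "HOL-Library.Extended_Real"
begin

text \<open>Elements of T(X) = X + R x X + {exists*, forall*}, with X a set of naturals.\<close>
datatype tgt = Idx nat | W real nat | Ex | Fa

fun inT :: "nat \<Rightarrow> tgt \<Rightarrow> bool" where
  "inT n (Idx k) = (k \<in> {1..n})"
| "inT n (W r k) = (k \<in> {1..n})"
| "inT n Ex = True"
| "inT n Fa = True"

definition tle :: "tgt \<Rightarrow> tgt \<Rightarrow> bool" where
  "tle x y \<longleftrightarrow> x = y \<or> x = Ex \<or> y = Fa \<or>
     (\<exists>r1 r2 k. x = W r1 k \<and> y = W r2 k \<and> r1 \<ge> r2)"

text \<open>Arrows m -> n: functions [m] -> T([n]), represented as functions on nat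
  that are Ex outside [m] (extensional representation).\<close>
definition hom :: "nat \<Rightarrow> nat \<Rightarrow> (nat \<Rightarrow> tgt) set" where
  "hom m n = {f. (\<forall>i. i \<notin> {1..m} \<longrightarrow> f i = Ex)
      \<and> (\<forall>i\<in>{1..m}. inT n (f i))
      \<and> (\<forall>i\<in>{1..m}. \<forall>j\<in>{1..m}. i \<noteq> j \<longrightarrow>
           (\<forall>k. f i = Idx k \<longrightarrow> f j \<noteq> Idx k \<and> (\<forall>r. f j \<noteq> W r k)))}"

definition hle :: "(nat \<Rightarrow> tgt) \<Rightarrow> (nat \<Rightarrow> tgt) \<Rightarrow> bool" where
  "hle f g \<longleftrightarrow> (\<forall>i. tle (f i) (g i))"

fun shift :: "nat \<Rightarrow> tgt \<Rightarrow> tgt" where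
  "shift n (Idx j) = Idx (n + j)"
| "shift n (W r j) = W r (n + j)"
| "shift n Ex = Ex"
| "shift n Fa = Fa"

text \<open>Monoidal sum of f : m -> n and g : m' -> n' (m' is implicit via extensionality).\<close>
definition hsum :: "nat \<Rightarrow> nat \<Rightarrow> (nat \<Rightarrow> tgt) \<Rightarrow> (nat \<Rightarrow> tgt) \<Rightarrow> (nat \<Rightarrow> tgt)" where
  "hsum m n f g = (\<lambda>i. if i \<le> m then f i else shift n (g (i - m)))"

fun idx :: "tgt \<Rightarrow> nat" where
  "idx (Idx k) = k" | "idx (W r k) = k" | "idx Ex = 0" | "idx Fa = 0"

fun wt :: "tgt \<Rightarrow> real" where
  "wt (W r k) = r" | "wt (Idx k) = 0" | "wt Ex = 0" | "wt Fa = 0"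

fun isW :: "tgt \<Rightarrow> bool" where
  "isW (W r k) = True" | "isW (Idx k) = False" | "isW Ex = False" | "isW Fa = False"

fun isIdx :: "tgt \<Rightarrow> bool" where
  "isIdx (Idx k) = True" | "isIdx (W r k) = False" | "isIdx Ex = False" | "isIdx Fa = False"

definition cont :: "nat \<Rightarrow> tgt \<Rightarrow> bool" where
  "cont l x \<longleftrightarrow> (isIdx x \<or> isW x) \<and> idx x \<in> {1..l}"

text \<open>The sequence v_0 = l+i, v_(j+1) = f(index of v_j) (valid while the walk continues).\<close>
definition tseq :: "nat \<Rightarrow> (nat \<Rightarrow> tgt) \<Rightarrow> nat \<Rightarrow> nat \<Rightarrow> tgt" where
  "tseq l f i j = ((\<lambda>x. f (idx x)) ^^ j) (Idx (l + i))"

definition tr_at :: "nat \<Rightarrow> (nat \<Rightarrow> tgt) \<Rightarrow> nat \<Rightarrow> tgt" where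
  "tr_at l f i =
    (let v = tseq l f i in
     if \<exists>K. K \<ge> 1 \<and> \<not> cont l (v K) then
       (let K = (LEAST K. K \<ge> 1 \<and> \<not> cont l (v K));
            S = (\<Sum>j\<in>{1..K}. wt (v j)) in
        case v K of
          Ex \<Rightarrow> Ex
        | Fa \<Rightarrow> Fa
        | Idx k \<Rightarrow> (if \<forall>j\<in>{1..<K}. isIdx (v j) then Idx (k - l) else W S (k - l))
        | W r k \<Rightarrow> W S (k - l))
     else
       (let P = {j. j \<ge> 1 \<and> isW (v j)};
            w' = (\<lambda>t. wt (v (Infinite_Set.enumerate P (t - 1)))) in
        if liminf (\<lambda>N. ereal ((\<Sum>t\<in>{1..N}. w' t) / real N)) \<ge> 0 then Ex else Fa))"

definition htr :: "nat \<Rightarrow> nat \<Rightarrow> (nat \<Rightarrow> tgt) \<Rightarrow> (nat \<Rightarrow> tgt)" where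
  "htr l m f = (\<lambda>i. if i \<in> {1..m} then tr_at l f i else Ex)"

definition Mset :: "('a \<Rightarrow> 'a \<Rightarrow> bool) \<Rightarrow> 'a set \<Rightarrow> 'a set set" where
  "Mset le X = {S. S \<noteq> {} \<and> finite S \<and> S \<subseteq> X \<and>
      (\<forall>x\<in>S. \<forall>y\<in>S. x \<noteq> y \<longrightarrow> \<not> le x y \<and> \<not> le y x)}"

definition Mle :: "('a \<Rightarrow> 'a \<Rightarrow> bool) \<Rightarrow> 'a set \<Rightarrow> 'a set \<Rightarrow> bool" where
  "Mle le S T \<longleftrightarrow> (\<forall>x\<in>S. \<exists>y\<in>T. le x y)"

definition maxel :: "('a \<Rightarrow> 'a \<Rightarrow> bool) \<Rightarrow> 'a set \<Rightarrow> 'a set" where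
  "maxel le S = {x\<in>S. \<forall>y\<in>S. le x y \<longrightarrow> y = x}"

definition Msum :: "nat \<Rightarrow> nat \<Rightarrow> (nat \<Rightarrow> tgt) set \<Rightarrow> (nat \<Rightarrow> tgt) set \<Rightarrow> (nat \<Rightarrow> tgt) set" where
  "Msum m n S T = maxel hle ((\<lambda>(f, g). hsum m n f g) ` (S \<times> T))"

definition Mtr :: "nat \<Rightarrow> nat \<Rightarrow> (nat \<Rightarrow> tgt) set \<Rightarrow> (nat \<Rightarrow> tgt) set" where
  "Mtr l m S = maxel hle (htr l m ` S)"

end

theory Submission
  imports Defs
begin

text \<open>
  Both the sum and the trace are monotone on single arrows, and lifting a monotone operation to
  antichains by taking maximal elements preserves the order on \<open>\<M>\<close>, because in a finite
  poset every element lies below a maximal one. For the trace,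
  let \<open>f \<le> g\<close> and follow the two walks starting at \<open>l + i\<close>: as long as \<open>f\<close>'s walk
  neither reaches \<open>\<exists>\<^sup>*\<close> nor \<open>g\<close>'s walk reaches \<open>\<forall>\<^sup>*\<close>, they visit the same
  indices, with \<open>g\<close>'s weights no larger than \<open>f\<close>'s. Hence either one of those two events
  decides the comparison, or both walks exit at the same point with \<open>g\<close>'s accumulated weight no
  larger, or both run forever and \<open>g\<close>'s mean payoffs are termwise no larger.
\<close>

instantiation tgt :: order
begin

definition less_eq_tgt :: "tgt \<Rightarrow> tgt \<Rightarrow> bool" where
  "less_eq_tgt = tle"

definition less_tgt :: "tgt \<Rightarrow> tgt \<Rightarrow> bool" where
  "less_tgt x y \<longleftrightarrow> tle x y \<and> x \<noteq> y"

instance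
proof
  fix x y z :: tgt
  show "x < y \<longleftrightarrow> x \<le> y \<and> \<not> y \<le> x"
    unfolding less_tgt_def less_eq_tgt_def tle_def by (cases x; cases y) auto
  show "x \<le> x" by (simp add: less_eq_tgt_def tle_def)
  show "x \<le> y \<Longrightarrow> y \<le> z \<Longrightarrow> x \<le> z"
    unfolding less_eq_tgt_def tle_def by (cases x; cases y; cases z) auto
  show "x \<le> y \<Longrightarrow> y \<le> x \<Longrightarrow> x = y"
    unfolding less_eq_tgt_def tle_def by (cases x; cases y) auto
qed

end

lemma hle_eq_le: "hle = (\<le>)"
  by (simp add: fun_eq_iff hle_def le_fun_def less_eq_tgt_def)

lemma Mle_maxel_maxel:
  fixes X Y :: "'a::order set"
  assumes "finite Y" and below: "\<forall>x\<in>X. \<exists>y\<in>Y. x \<le> y"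
  shows "Mle (\<le>) (maxel (\<le>) X) (maxel (\<le>) Y)"
  unfolding Mle_def
proof
  fix x assume "x \<in> maxel (\<le>) X"
  then obtain y where "y \<in> Y" "x \<le> y" using below by (auto simp: maxel_def)
  then obtain z where "z \<in> Y" "y \<le> z" "\<forall>b\<in>Y. z \<le> b \<longrightarrow> z = b"
    using finite_has_maximal2[OF \<open>finite Y\<close>] by blast
  then show "\<exists>z\<in>maxel (\<le>) Y. x \<le> z"
    using \<open>x \<le> y\<close> by (auto simp: maxel_def intro: order_trans)
qed

lemma shift_mono: "x \<le> y \<Longrightarrow> shift n x \<le> shift n y"
  unfolding less_eq_tgt_def tle_def by (cases x; cases y) auto

lemma hsum_mono: "f \<le> f' \<Longrightarrow> g \<le> g' \<Longrightarrow> hsum m n f g \<le> hsum m n f' g'"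
  by (simp add: hsum_def le_fun_def shift_mono)

lemma Msum_mono:
  assumes "finite S'" "finite T'" "Mle hle S S'" "Mle hle T T'"
  shows "Mle hle (Msum m n S T) (Msum m n S' T')"
  unfolding Msum_def hle_eq_le
proof (rule Mle_maxel_maxel)
  show "finite ((\<lambda>(f, g). hsum m n f g) ` (S' \<times> T'))" using assms(1,2) by simp
  have "\<exists>(f', g')\<in>S' \<times> T'. hsum m n f g \<le> hsum m n f' g'" if "f \<in> S" "g \<in> T" for f g
    using that assms(3,4) hsum_mono unfolding Mle_def hle_eq_le by fast
  then show "\<forall>x\<in>(\<lambda>(f, g). hsum m n f g) ` (S \<times> T).
      \<exists>y\<in>(\<lambda>(f, g). hsum m n f g) ` (S' \<times> T'). x \<le> y"
    by fast
qed

definition exit_value :: "nat \<Rightarrow> (nat \<Rightarrow> tgt) \<Rightarrow> nat \<Rightarrow> tgt" where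
  "exit_value l v K =
    (case v K of
       Ex \<Rightarrow> Ex
     | Fa \<Rightarrow> Fa
     | Idx k \<Rightarrow> (if \<forall>j\<in>{1..<K}. isIdx (v j) then Idx (k - l) else W (\<Sum>j\<in>{1..K}. wt (v j)) (k - l))
     | W r k \<Rightarrow> W (\<Sum>j\<in>{1..K}. wt (v j)) (k - l))"

definition mean_payoff_value :: "(nat \<Rightarrow> tgt) \<Rightarrow> tgt" where
  "mean_payoff_value v =
    (let P = {j. j \<ge> 1 \<and> isW (v j)};
         w' = (\<lambda>t. wt (v (Infinite_Set.enumerate P (t - 1)))) in
     if liminf (\<lambda>N. ereal ((\<Sum>t\<in>{1..N}. w' t) / real N)) \<ge> 0 then Ex else Fa)"

definition walk_trace :: "nat \<Rightarrow> (nat \<Rightarrow> tgt) \<Rightarrow> tgt" where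
  "walk_trace l v =
    (if \<exists>K. K \<ge> 1 \<and> \<not> cont l (v K) then exit_value l v (LEAST K. K \<ge> 1 \<and> \<not> cont l (v K))
     else mean_payoff_value v)"

lemma tr_at_eq_walk_trace: "tr_at l f i = walk_trace l (tseq l f i)"
  unfolding tr_at_def walk_trace_def exit_value_def mean_payoff_value_def Let_def ..

lemma walk_trace_stop:
  assumes "1 \<le> K" "\<not> cont l (v K)" "\<forall>j\<in>{1..<K}. cont l (v j)"
  shows "walk_trace l v = exit_value l v K"
proof -
  have "(LEAST K. K \<ge> 1 \<and> \<not> cont l (v K)) = K"
    using assms by (intro Least_equality) (auto simp: not_less [symmetric])
  then show ?thesis
    using assms(1,2) by (auto simp: walk_trace_def)
qed

lemma walk_trace_forever: "\<forall>K\<ge>1. cont l (v K) \<Longrightarrow> walk_trace l v = mean_payoff_value v"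
  by (auto simp: walk_trace_def)

text \<open>The part of the order on targets that keeps the walk on the same path: only weights may decrease.\<close>

definition shape_le :: "tgt \<Rightarrow> tgt \<Rightarrow> bool" where
  "shape_le x y \<longleftrightarrow> x = y \<or> (\<exists>r r' k. x = W r k \<and> y = W r' k \<and> r' \<le> r)"

lemma le_tgt_iff_shape_le: "x \<le> y \<longleftrightarrow> shape_le x y \<or> x = Ex \<or> y = Fa"
  unfolding less_eq_tgt_def tle_def shape_le_def by auto

lemma shape_le_same_shape:
  assumes "shape_le x y"
  shows "idx y = idx x" "cont l y = cont l x" "isIdx y = isIdx x" "isW y = isW x" "wt y \<le> wt x"
  using assms unfolding shape_le_def cont_def by auto

lemma exit_value_mono:
  assumes "1 \<le> K" and shape: "\<forall>j\<in>{1..K}. shape_le (v j) (u j)"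
  shows "exit_value l v K \<le> exit_value l u K"
proof -
  have same: "isIdx (u j) = isIdx (v j)" "wt (u j) \<le> wt (v j)" if "j \<in> {1..K}" for j
    using shape that shape_le_same_shape(3,5) by blast+
  have sums: "(\<Sum>j\<in>{1..K}. wt (u j)) \<le> (\<Sum>j\<in>{1..K}. wt (v j))"
    using same(2) by (rule sum_mono)
  have all_Idx: "(\<forall>j\<in>{1..<K}. isIdx (u j)) = (\<forall>j\<in>{1..<K}. isIdx (v j))"
    using same(1) by auto
  have "shape_le (v K) (u K)"
    using shape \<open>1 \<le> K\<close> by simp
  then consider "u K = v K" | r r' k where "v K = W r k" "u K = W r' k"
    unfolding shape_le_def by auto
  then show ?thesis
  proof cases
    case 1
    then show ?thesis
      using all_Idx sums
      by (cases "v K") (auto simp: exit_value_def le_tgt_iff_shape_le shape_le_def)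
  next
    case 2
    then show ?thesis
      using sums by (auto simp: exit_value_def le_tgt_iff_shape_le shape_le_def)
  qed
qed

text \<open>The hypothesis on index 0 is needed: when only finitely many steps carry a weight,
  enumerating them returns unspecified indices, possibly 0, beyond the last one.\<close>

lemma mean_payoff_value_mono:
  assumes "v 0 = u 0" and shape: "\<forall>j\<ge>1. shape_le (v j) (u j)"
  shows "mean_payoff_value v \<le> mean_payoff_value u"
proof -
  define P where "P = {j. 1 \<le> j \<and> isW (v j)}"
  have "{j. 1 \<le> j \<and> isW (u j)} = P"
    using shape shape_le_same_shape(4) unfolding P_def by blast
  then have u: "mean_payoff_value u = (if 0 \<le> liminf (\<lambda>N. ereal ((\<Sum>t\<in>{1..N}.
     wt (u (Infinite_Set.enumerate P (t - 1)))) / real N)) then Ex else Fa)"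
    by (simp add: mean_payoff_value_def)
  have v: "mean_payoff_value v = (if 0 \<le> liminf (\<lambda>N. ereal ((\<Sum>t\<in>{1..N}.
     wt (v (Infinite_Set.enumerate P (t - 1)))) / real N)) then Ex else Fa)"
    unfolding P_def by (simp add: mean_payoff_value_def)
  have "wt (u j) \<le> wt (v j)" for j
    using shape shape_le_same_shape(5) \<open>v 0 = u 0\<close> by (cases "j = 0") auto
  then have "liminf (\<lambda>N. ereal ((\<Sum>t\<in>{1..N}. wt (u (Infinite_Set.enumerate P (t - 1)))) / real N))
      \<le> liminf (\<lambda>N. ereal ((\<Sum>t\<in>{1..N}. wt (v (Infinite_Set.enumerate P (t - 1)))) / real N))"
    by (intro Liminf_mono) (simp add: divide_right_mono sum_mono)
  then show ?thesis
    unfolding u v by (auto simp: le_tgt_iff_shape_le)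
qed

lemma walk_trace_mono:
  assumes "v 0 = u 0"
    and le: "\<And>j. \<forall>j'\<in>{1..<j}. shape_le (v j') (u j') \<Longrightarrow> v j \<le> u j"
  shows "walk_trace l v \<le> walk_trace l u"
proof (cases "\<exists>j\<ge>1. \<not> shape_le (v j) (u j) \<or> \<not> cont l (v j)")
  case True
  define d where "d = (LEAST j. j \<ge> 1 \<and> (\<not> shape_le (v j) (u j) \<or> \<not> cont l (v j)))"
  have d: "1 \<le> d" "\<not> shape_le (v d) (u d) \<or> \<not> cont l (v d)"
    using LeastI_ex[OF True] unfolding d_def by auto
  have before: "shape_le (v j) (u j) \<and> cont l (v j)" if "j \<in> {1..<d}" for j
  proof -
    have "\<not> (1 \<le> j \<and> (\<not> shape_le (v j) (u j) \<or> \<not> cont l (v j)))"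
      using that unfolding d_def by (intro not_less_Least) simp
    then show ?thesis
      using that by auto
  qed
  then have cont_v: "\<forall>j\<in>{1..<d}. cont l (v j)" and cont_u: "\<forall>j\<in>{1..<d}. cont l (u j)"
    using shape_le_same_shape(2) by blast+
  show ?thesis
  proof (cases "shape_le (v d) (u d)")
    case True
    then have stop_v: "\<not> cont l (v d)" and stop_u: "\<not> cont l (u d)"
      using d(2) shape_le_same_shape(2) by blast+
    have "\<forall>j\<in>{1..d}. shape_le (v j) (u j)"
      using before True by (auto simp: le_less)
    then have "exit_value l v d \<le> exit_value l u d"
      using d(1) exit_value_mono by blast
    then show ?thesis
      using walk_trace_stop d(1) stop_v stop_u cont_v cont_u by simp
  next
    case False
    then have "v d = Ex \<or> u d = Fa"
      using le[of d] before le_tgt_iff_shape_le by blast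
    then show ?thesis
    proof
      assume "v d = Ex"
      then have "walk_trace l v = Ex"
        using walk_trace_stop[of d l v] d(1) cont_v by (simp add: cont_def exit_value_def)
      then show ?thesis by (simp add: le_tgt_iff_shape_le)
    next
      assume "u d = Fa"
      then have "walk_trace l u = Fa"
        using walk_trace_stop[of d l u] d(1) cont_u by (simp add: cont_def exit_value_def)
      then show ?thesis by (simp add: le_tgt_iff_shape_le)
    qed
  qed
next
  case False
  then have shape: "\<forall>j\<ge>1. shape_le (v j) (u j)"
    and "\<forall>K\<ge>1. cont l (v K)" "\<forall>K\<ge>1. cont l (u K)"
    using shape_le_same_shape(2) by blast+
  moreover have "mean_payoff_value v \<le> mean_payoff_value u"
    using \<open>v 0 = u 0\<close> shape by (rule mean_payoff_value_mono)
  ultimately show ?thesis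
    by (simp add: walk_trace_forever)
qed

lemma tseq_le:
  assumes "f \<le> g" and shape: "\<forall>j'\<in>{1..<j}. shape_le (tseq l f i j') (tseq l g i j')"
  shows "tseq l f i j \<le> tseq l g i j"
proof (cases j)
  case 0
  then show ?thesis by (simp add: tseq_def)
next
  case (Suc p)
  have "idx (tseq l f i p) = idx (tseq l g i p)"
  proof (cases p)
    case 0
    then show ?thesis by (simp add: tseq_def)
  next
    case (Suc q)
    then show ?thesis
      using shape \<open>j = Suc p\<close> shape_le_same_shape(1) by force
  qed
  then show ?thesis
    using \<open>f \<le> g\<close> \<open>j = Suc p\<close> by (simp add: tseq_def le_fun_def)
qed

lemma tr_at_mono:
  assumes "f \<le> g"
  shows "tr_at l f i \<le> tr_at l g i"
  unfolding tr_at_eq_walk_trace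
  by (rule walk_trace_mono) (simp add: tseq_def, rule tseq_le[OF assms])

lemma htr_mono: "f \<le> g \<Longrightarrow> htr l m f \<le> htr l m g"
  by (simp add: htr_def le_fun_def tr_at_mono)

lemma Mtr_mono:
  assumes "finite S'" "Mle hle S S'"
  shows "Mle hle (Mtr l m S) (Mtr l m S')"
  unfolding Mtr_def hle_eq_le
proof (rule Mle_maxel_maxel)
  show "finite (htr l m ` S')"
    using assms(1) by simp
  have "\<exists>g\<in>S'. htr l m f \<le> htr l m g" if "f \<in> S" for f
    using that assms(2) htr_mono unfolding Mle_def hle_eq_le by metis
  then show "\<forall>x\<in>htr l m ` S. \<exists>y\<in>htr l m ` S'. x \<le> y"
    by blast
qed

theorem propositionD16:
  shows "(\<forall>m n m' n' S S' T T'.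
            S \<in> Mset hle (hom m n) \<and> S' \<in> Mset hle (hom m n) \<and>
            T \<in> Mset hle (hom m' n') \<and> T' \<in> Mset hle (hom m' n') \<and>
            Mle hle S S' \<and> Mle hle T T' \<longrightarrow>
            Mle hle (Msum m n S T) (Msum m n S' T'))
       \<and> (\<forall>l m n S S'.
            S \<in> Mset hle (hom (l + m) (l + n)) \<and> S' \<in> Mset hle (hom (l + m) (l + n)) \<and>
            Mle hle S S' \<longrightarrow>
            Mle hle (Mtr l m S) (Mtr l m S'))"
proof (intro conjI allI impI)
  fix m n m' n' S S' T T'
  assume "S \<in> Mset hle (hom m n) \<and> S' \<in> Mset hle (hom m n) \<and>
    T \<in> Mset hle (hom m' n') \<and> T' \<in> Mset hle (hom m' n') \<and> Mle hle S S' \<and> Mle hle T T'"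
  then show "Mle hle (Msum m n S T) (Msum m n S' T')"
    by (intro Msum_mono) (simp_all add: Mset_def)
next
  fix l m n S S'
  assume "S \<in> Mset hle (hom (l + m) (l + n)) \<and> S' \<in> Mset hle (hom (l + m) (l + n)) \<and> Mle hle S S'"
  then show "Mle hle (Mtr l m S) (Mtr l m S')"
    by (intro Mtr_mono) (simp_all add: Mset_def)
qed

end
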